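(* Let $G=(V,E)$ be a finite graph and suppose that both $I_1,\dots,I_d$ and $\bar I_1,\dots,\bar I_{\bar d}$ are partitions of $V$ into maximal independent sets characterizing $G$ as a mean valid graph. If $|I_j|\ne|\bar I_k|$, then $I_j\cap\bar I_k=\emptyset$.
   Context: A partition $V=I_1\sqcup\dots\sqcup I_d$ ($d\ge2$) of the vertex set into pairwise disjoint maximal independent sets, ordered with $|I_1|\ge\dots\ge|I_d|$, characterizes $G$ as a mean valid graph if every independent set $I$ of $G$ satisfies $\sum_{s=1}^d|I\cap I_s|/|I_s|\le1$. *)

theory Defs
  imports Complex_Main
begin

definition graph :: "'a set \<Rightarrow> ('a \<Rightarrow> 'a \<Rightarrow> bool) \<Rightarrow> bool" where
  "graph V E \<longleftrightarrow> finite V \<and> (\<forall>u v. E u v \<longrightarrow> u \<in> V \<and> v \<in> V)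
     \<and> (\<forall>u v. E u v \<longrightarrow> E v u) \<and> (\<forall>v. \<not> E v v)"

definition indep_set :: "'a set \<Rightarrow> ('a \<Rightarrow> 'a \<Rightarrow> bool) \<Rightarrow> 'a set \<Rightarrow> bool" where
  "indep_set V E I \<longleftrightarrow> I \<subseteq> V \<and> (\<forall>u\<in>I. \<forall>v\<in>I. \<not> E u v)"

definition max_indep_set :: "'a set \<Rightarrow> ('a \<Rightarrow> 'a \<Rightarrow> bool) \<Rightarrow> 'a set \<Rightarrow> bool" where
  "max_indep_set V E I \<longleftrightarrow> indep_set V E I \<and>
     (\<forall>J. indep_set V E J \<and> I \<subseteq> J \<longrightarrow> J = I)"

definition mis_partition :: "'a set \<Rightarrow> ('a \<Rightarrow> 'a \<Rightarrow> bool) \<Rightarrow> nat \<Rightarrow> (nat \<Rightarrow> 'a set) \<Rightarrow> bool" where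
  "mis_partition V E d P \<longleftrightarrow> d \<ge> 2 \<and>
     (\<forall>s\<in>{1..d}. max_indep_set V E (P s)) \<and>
     (\<forall>s\<in>{1..d}. \<forall>t\<in>{1..d}. s \<noteq> t \<longrightarrow> P s \<inter> P t = {}) \<and>
     (\<Union>s\<in>{1..d}. P s) = V \<and>
     (\<forall>s\<in>{1..d}. \<forall>t\<in>{1..d}. s \<le> t \<longrightarrow> card (P t) \<le> card (P s))"

definition mean_valid_partition :: "'a set \<Rightarrow> ('a \<Rightarrow> 'a \<Rightarrow> bool) \<Rightarrow> nat \<Rightarrow> (nat \<Rightarrow> 'a set) \<Rightarrow> bool" where
  "mean_valid_partition V E d P \<longleftrightarrow> mis_partition V E d P \<and>
     (\<forall>I. indep_set V E I \<longrightarrow>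
        (\<Sum>s=1..d. real (card (I \<inter> P s)) / real (card (P s))) \<le> 1)"

end

theory Submission
  imports Defs
begin

text \<open>Let \<open>a s t = |P s \<inter> Q t|\<close>, with row sums \<open>p s = |P s|\<close> and column sums \<open>q t = |Q t|\<close>.
  Mean validity of each partition, applied to the parts of the other one, gives
  \<open>\<Sum>s t. a s t * p s / q t \<le> \<Sum>s t. a s t\<close> and symmetrically with \<open>p\<close> and \<open>q\<close> exchanged.
  Adding, \<open>\<Sum>s t. a s t * (p s - q t)\<^sup>2 / (p s * q t) \<le> 0\<close>, so every term vanishes and
  \<open>p s = q t\<close> whenever \<open>P s\<close> and \<open>Q t\<close> meet.\<close>

lemma sum_sum_mult_ratio_le:
  fixes a :: "'s \<Rightarrow> 't \<Rightarrow> real"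
  assumes "\<And>s. s \<in> S \<Longrightarrow> p s \<ge> 0"
    and "\<And>s. s \<in> S \<Longrightarrow> (\<Sum>t\<in>K. a s t / q t) \<le> 1"
  shows "(\<Sum>s\<in>S. \<Sum>t\<in>K. a s t * p s / q t) \<le> (\<Sum>s\<in>S. p s)"
proof -
  have "(\<Sum>s\<in>S. \<Sum>t\<in>K. a s t * p s / q t) = (\<Sum>s\<in>S. p s * (\<Sum>t\<in>K. a s t / q t))"
    by (simp add: sum_distrib_left mult.commute)
  also have "\<dots> \<le> (\<Sum>s\<in>S. p s)"
    by (rule sum_mono) (use assms in \<open>auto intro: mult_left_le\<close>)
  finally show ?thesis .
qed

lemma equal_marginals_on_support:
  fixes a :: "'s \<Rightarrow> 't \<Rightarrow> real"
  assumes "finite S" "finite K"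
    and nonneg: "\<And>s t. s \<in> S \<Longrightarrow> t \<in> K \<Longrightarrow> a s t \<ge> 0"
    and p_pos: "\<And>s. s \<in> S \<Longrightarrow> p s > 0"
    and q_pos: "\<And>t. t \<in> K \<Longrightarrow> q t > 0"
    and rows: "\<And>s. s \<in> S \<Longrightarrow> (\<Sum>t\<in>K. a s t) = p s"
    and cols: "\<And>t. t \<in> K \<Longrightarrow> (\<Sum>s\<in>S. a s t) = q t"
    and row_ratio: "\<And>s. s \<in> S \<Longrightarrow> (\<Sum>t\<in>K. a s t / q t) \<le> 1"
    and col_ratio: "\<And>t. t \<in> K \<Longrightarrow> (\<Sum>s\<in>S. a s t / p s) \<le> 1"
    and "s \<in> S" "t \<in> K" "a s t > 0"
  shows "p s = q t"
proof -
  define f where "f s t = a s t * (p s - q t)\<^sup>2 / (p s * q t)" for s t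
  have f_nonneg: "f s t \<ge> 0" if "s \<in> S" "t \<in> K" for s t
    unfolding f_def using p_pos[OF that(1)] q_pos[OF that(2)] nonneg[OF that] by simp
  have f_expand: "f s t = a s t * p s / q t + a s t * q t / p s - 2 * a s t"
    if "s \<in> S" "t \<in> K" for s t
    using p_pos[OF that(1)] q_pos[OF that(2)] unfolding f_def
    by (simp add: field_simps power2_eq_square)
  define A where "A = (\<Sum>s\<in>S. \<Sum>t\<in>K. a s t)"
  have "(\<Sum>s\<in>S. \<Sum>t\<in>K. a s t * p s / q t) \<le> (\<Sum>s\<in>S. p s)"
    by (rule sum_sum_mult_ratio_le) (use p_pos row_ratio in \<open>auto intro: less_imp_le\<close>)
  also have "\<dots> = A" unfolding A_def using rows by simp
  finally have bound_pq: "(\<Sum>s\<in>S. \<Sum>t\<in>K. a s t * p s / q t) \<le> A" .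
  have "(\<Sum>s\<in>S. \<Sum>t\<in>K. a s t * q t / p s) = (\<Sum>t\<in>K. \<Sum>s\<in>S. a s t * q t / p s)"
    by (rule sum.swap)
  also have "\<dots> \<le> (\<Sum>t\<in>K. q t)"
    by (rule sum_sum_mult_ratio_le) (use q_pos col_ratio in \<open>auto intro: less_imp_le\<close>)
  also have "\<dots> = A" unfolding A_def using cols by (simp add: sum.swap[of _ K S])
  finally have bound_qp: "(\<Sum>s\<in>S. \<Sum>t\<in>K. a s t * q t / p s) \<le> A" .
  have "(\<Sum>s\<in>S. \<Sum>t\<in>K. f s t)
      = (\<Sum>s\<in>S. \<Sum>t\<in>K. a s t * p s / q t + a s t * q t / p s - 2 * a s t)"
    using f_expand by simp
  also have "\<dots>
      = (\<Sum>s\<in>S. \<Sum>t\<in>K. a s t * p s / q t) + (\<Sum>s\<in>S. \<Sum>t\<in>K. a s t * q t / p s) - 2 * A"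
    unfolding A_def by (simp only: sum.distrib sum_subtractf sum_distrib_left)
  also have "\<dots> \<le> 0" using bound_pq bound_qp by simp
  finally have "(\<Sum>s\<in>S. \<Sum>t\<in>K. f s t) \<le> 0" .
  moreover have inner_nonneg: "\<forall>s\<in>S. (\<Sum>t\<in>K. f s t) \<ge> 0"
    using f_nonneg by (simp add: sum_nonneg)
  ultimately have "(\<Sum>s\<in>S. \<Sum>t\<in>K. f s t) = 0"
    using sum_nonneg[of S "\<lambda>s. \<Sum>t\<in>K. f s t"] by simp
  then have "(\<Sum>t\<in>K. f s t) = 0"
    using sum_nonneg_eq_0_iff[OF \<open>finite S\<close>, of "\<lambda>s. \<Sum>t\<in>K. f s t"] inner_nonneg \<open>s \<in> S\<close>
    by simp
  then have "f s t = 0"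
    using sum_nonneg_eq_0_iff[OF \<open>finite K\<close>, of "f s"] f_nonneg \<open>s \<in> S\<close> \<open>t \<in> K\<close> by simp
  then show ?thesis
    using \<open>a s t > 0\<close> p_pos[OF \<open>s \<in> S\<close>] q_pos[OF \<open>t \<in> K\<close>] unfolding f_def by simp
qed

lemma max_indep_set_nonempty:
  assumes "graph V E" "V \<noteq> {}" "max_indep_set V E I"
  shows "I \<noteq> {}"
proof
  assume "I = {}"
  obtain x where "x \<in> V" using assms(2) by blast
  then have "indep_set V E {x}" using assms(1) unfolding graph_def indep_set_def by auto
  then show False using assms(3) \<open>I = {}\<close> unfolding max_indep_set_def by blast
qed

lemma mis_partition_part:
  assumes "mis_partition V E d P" "s \<in> {1..d}"
  shows "max_indep_set V E (P s)" "indep_set V E (P s)" "P s \<subseteq> V"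
proof -
  show "max_indep_set V E (P s)" using assms unfolding mis_partition_def by blast
  then show "indep_set V E (P s)" unfolding max_indep_set_def by blast
  then show "P s \<subseteq> V" unfolding indep_set_def by blast
qed

lemma mis_partition_card_part_pos:
  assumes "graph V E" "V \<noteq> {}" "mis_partition V E d P" "s \<in> {1..d}"
  shows "card (P s) > 0"
proof -
  have "finite (P s)"
    using assms(1) mis_partition_part(3)[OF assms(3,4)] unfolding graph_def by (blast intro: finite_subset)
  then show ?thesis
    using max_indep_set_nonempty[OF assms(1,2) mis_partition_part(1)[OF assms(3,4)]] by auto
qed

lemma mis_partition_sum_card_Int:
  assumes "finite V" "mis_partition V E d P" "A \<subseteq> V"
  shows "(\<Sum>s\<in>{1..d}. real (card (A \<inter> P s))) = real (card A)"
proof -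
  have "A = (\<Union>s\<in>{1..d}. A \<inter> P s)" using assms(2,3) unfolding mis_partition_def by blast
  moreover have "card (\<Union>s\<in>{1..d}. A \<inter> P s) = (\<Sum>s\<in>{1..d}. card (A \<inter> P s))"
  proof (rule card_UN_disjoint)
    show "\<forall>s\<in>{1..d}. finite (A \<inter> P s)" using assms(1,3) finite_subset by blast
    show "\<forall>s\<in>{1..d}. \<forall>t\<in>{1..d}. s \<noteq> t \<longrightarrow> A \<inter> P s \<inter> (A \<inter> P t) = {}"
      using assms(2) unfolding mis_partition_def by blast
  qed simp
  ultimately show ?thesis by (metis of_nat_sum)
qed

lemma mean_valid_partition_sum_ratio_le:
  assumes "mean_valid_partition V E d P" "mis_partition V E d' Q" "t \<in> {1..d'}"
  shows "(\<Sum>s\<in>{1..d}. real (card (P s \<inter> Q t)) / real (card (P s))) \<le> 1"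
proof -
  have "(\<Sum>s=1..d. real (card (Q t \<inter> P s)) / real (card (P s))) \<le> 1"
    using assms mis_partition_part(2)[OF assms(2,3)] unfolding mean_valid_partition_def by blast
  then show ?thesis by (simp only: Int_commute)
qed

theorem lemma10:
  fixes V :: "'a set" and E :: "'a \<Rightarrow> 'a \<Rightarrow> bool"
    and d d' :: nat and P Q :: "nat \<Rightarrow> 'a set" and j k :: nat
  assumes "graph V E"
    and "mean_valid_partition V E d P"
    and "mean_valid_partition V E d' Q"
    and "j \<in> {1..d}" and "k \<in> {1..d'}"
    and "card (P j) \<noteq> card (Q k)"
  shows "P j \<inter> Q k = {}"
proof (rule ccontr)
  assume meet: "P j \<inter> Q k \<noteq> {}"
  have fin: "finite V" using assms(1) unfolding graph_def by simp
  have P: "mis_partition V E d P" and Q: "mis_partition V E d' Q"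
    using assms(2,3) unfolding mean_valid_partition_def by auto
  have "V \<noteq> {}" using meet mis_partition_part(3)[OF P assms(4)] by blast
  have "real (card (P j)) = real (card (Q k))"
  proof (rule equal_marginals_on_support[where a = "\<lambda>s t. real (card (P s \<inter> Q t))", OF _ _ _
        _ _ _ _ _ mean_valid_partition_sum_ratio_le[OF assms(2) Q] assms(4,5)])
    show "real (card (P j \<inter> Q k)) > 0"
      using meet mis_partition_part(3)[OF P assms(4)] fin
      by (simp add: card_gt_0_iff) (meson finite_Int finite_subset)
    show "(\<Sum>t\<in>{1..d'}. real (card (P s \<inter> Q t)) / real (card (Q t))) \<le> 1" if "s \<in> {1..d}" for s
      using mean_valid_partition_sum_ratio_le[OF assms(3) P that] by (simp only: Int_commute)
    show "(\<Sum>t\<in>{1..d'}. real (card (P s \<inter> Q t))) = real (card (P s))" if "s \<in> {1..d}" for s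
      using mis_partition_sum_card_Int[OF fin Q mis_partition_part(3)[OF P that]] .
    show "(\<Sum>s\<in>{1..d}. real (card (P s \<inter> Q t))) = real (card (Q t))" if "t \<in> {1..d'}" for t
      using mis_partition_sum_card_Int[OF fin P mis_partition_part(3)[OF Q that]]
      by (simp only: Int_commute)
  qed (use fin P Q \<open>V \<noteq> {}\<close> assms(1) in
      \<open>simp_all add: mis_partition_card_part_pos\<close>)
  then show False using assms(6) by simp
qed

end
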